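(* Let $\Gamma$ be a metric graph and let $D$ be a vertex-supported effective divisor on $\Gamma$ with $d=\deg(D)$. Then the dimension of the cell complex $|D|$ is at most $d$. In addition, if $\Gamma$ is $2$-connected, then the dimension of the cell complex $|D|$ is at most $d-1$.
   Context: A metric graph $\Gamma=(V,E)$ is a connected undirected graph (loops and parallel edges allowed) whose edges have positive real lengths $M_e$; each edge is viewed as a real segment. A divisor is a finite formal $\mathbb{Z}$-combination $D=\sum_{x\in\Gamma}D(x)\cdot x$ of points of $\Gamma$; it is effective if all $D(x)\ge 0$, its degree is $\sum_x D(x)$, its support is $\{x: D(x)\neq 0\}$, and it is vertex-supported if its support is contained in $V$. A rational function is a continuous $f:\Gamma\to\mathbb{R}$, piecewise linear on each edge with finitely many pieces and integer slopes; $\mathrm{ord}_x(f)$ is the sum of the outgoing slopes of $f$ at $x$ over all directions at $x$, and $(f)=\sum_x \mathrm{ord}_x(f)\cdot x$. $R(D)$ is the set of rational functions $f$ with $D+(f)$ effective, and the linear system is $|D|=\{D+(f): f\in R(D)\}$. Cell structure of $|D|$: identify each open edge $e$ with $(0,M_e)$ (fixing an orientation). A cell is specified by data: a nonnegative integer $d_v$ for each $v\in V$; for some edges $e$ an ordered partition $d_e=\sum_{i=1}^{r_e}d_e^i$ into positive integers; and an integer $m_e$ for each $e\in E$. A divisor $L\in|D|$ lies in this cell iff $L(v)=d_v$ for all $v\in V$; on each edge $e$ with a partition, $L$ restricted to the interior of $e$ equals $\sum_{i=1}^{r_e}d_e^i x_i$ with $0<x_1<\dots<x_{r_e}<M_e$,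 while on other edges $L$ vanishes at all interior points; and for any $f\in R(D)$ with $L=D+(f)$, the outgoing slope of $f$ at the point $0$ of $e$ is $m_e$ for each $e$. Any $L$ in a cell is called a representative of it. For a cell $C$ with representative $L$, setting $I_L=\{x\in\Gamma\setminus V: L(x)>0\}$, the dimension of $C$ equals one less than the number of connected components of $\Gamma\setminus I_L$ (a known fact from Haase–Musiker–Yu). The dimension of $|D|$ is the maximum dimension of its cells. *)

theory Defs
  imports Complex_Main
begin

text \<open>A point of a metric graph: a vertex, or an interior point of an edge e, identified
  with a parameter t in the open interval (0, len e) (edge oriented from src e to tgt e).\<close>
datatype ('v, 'e) gpoint = Vert 'v | EPt 'e real

record ('v, 'e) mgraph =
  verts :: "'v set"
  edges :: "'e set"
  src :: "'e \<Rightarrow> 'v"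
  tgt :: "'e \<Rightarrow> 'v"
  len :: "'e \<Rightarrow> real"

definition gpoints :: "('v, 'e) mgraph \<Rightarrow> ('v, 'e) gpoint set" where
  "gpoints G = Vert ` verts G \<union> {EPt e t | e t. e \<in> edges G \<and> 0 < t \<and> t < len G e}"

definition epos :: "('v, 'e) mgraph \<Rightarrow> 'e \<Rightarrow> real \<Rightarrow> ('v, 'e) gpoint" where
  "epos G e u = (if u = 0 then Vert (src G e) else if u = len G e then Vert (tgt G e) else EPt e u)"

text \<open>Connected components of the complement
  of S are the classes of the reflexive-transitive closure.\<close>
definition seg_rel :: "('v, 'e) mgraph \<Rightarrow> ('v, 'e) gpoint set \<Rightarrow> (('v, 'e) gpoint \<times> ('v, 'e) gpoint) set" where
  "seg_rel G S = {(epos G e s, epos G e t) | e s t. e \<in> edges G \<and>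
      0 \<le> s \<and> s \<le> len G e \<and> 0 \<le> t \<and> t \<le> len G e \<and>
      (\<forall>u. min s t \<le> u \<and> u \<le> max s t \<longrightarrow> epos G e u \<notin> S)}"

definition num_components :: "('v, 'e) mgraph \<Rightarrow> ('v, 'e) gpoint set \<Rightarrow> nat" where
  "num_components G S = card ((gpoints G - S) // ((seg_rel G S)\<^sup>*))"

definition metric_graph :: "('v, 'e) mgraph \<Rightarrow> bool" where
  "metric_graph G \<longleftrightarrow> finite (verts G) \<and> finite (edges G) \<and>
     src G ` edges G \<subseteq> verts G \<and> tgt G ` edges G \<subseteq> verts G \<and>
     (\<forall>e\<in>edges G. 0 < len G e) \<and> num_components G {} = 1"

definition two_connected :: "('v, 'e) mgraph \<Rightarrow> bool" where
  "two_connected G \<longleftrightarrow> metric_graph G \<and> (\<forall>x\<in>gpoints G. num_components G {x} = 1)"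

definition supp :: "(('v, 'e) gpoint \<Rightarrow> int) \<Rightarrow> ('v, 'e) gpoint set" where
  "supp D = {x. D x \<noteq> 0}"

definition is_divisor :: "('v, 'e) mgraph \<Rightarrow> (('v, 'e) gpoint \<Rightarrow> int) \<Rightarrow> bool" where
  "is_divisor G D \<longleftrightarrow> finite (supp D) \<and> supp D \<subseteq> gpoints G"

definition div_deg :: "(('v, 'e) gpoint \<Rightarrow> int) \<Rightarrow> int" where
  "div_deg D = (\<Sum>x\<in>supp D. D x)"

definition effective :: "(('v, 'e) gpoint \<Rightarrow> int) \<Rightarrow> bool" where
  "effective D \<longleftrightarrow> (\<forall>x. 0 \<le> D x)"

definition vertex_supported :: "('v, 'e) mgraph \<Rightarrow> (('v, 'e) gpoint \<Rightarrow> int) \<Rightarrow> bool" where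
  "vertex_supported G D \<longleftrightarrow> supp D \<subseteq> Vert ` verts G"

definition edge_fun :: "('v, 'e) mgraph \<Rightarrow> (('v, 'e) gpoint \<Rightarrow> real) \<Rightarrow> 'e \<Rightarrow> real \<Rightarrow> real" where
  "edge_fun G f e = (\<lambda>u. f (epos G e u))"

definition is_rational :: "('v, 'e) mgraph \<Rightarrow> (('v, 'e) gpoint \<Rightarrow> real) \<Rightarrow> bool" where
  "is_rational G f \<longleftrightarrow> (\<forall>e\<in>edges G. \<exists>B. finite B \<and> 0 \<in> B \<and> len G e \<in> B \<and> B \<subseteq> {0..len G e} \<and>
     (\<forall>a\<in>B. \<forall>b\<in>B. a < b \<and> {a<..<b} \<inter> B = {} \<longrightarrow>
        (\<exists>c::int. \<forall>u\<in>{a..b}. edge_fun G f e u = edge_fun G f e a + of_int c * (u - a))))"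

text \<open>Outgoing slope of g at u in direction sigma (1 = increasing parameter, -1 = decreasing).\<close>
definition out_slope :: "(real \<Rightarrow> real) \<Rightarrow> real \<Rightarrow> real \<Rightarrow> int" where
  "out_slope g u \<sigma> = (THE c::int. \<exists>\<epsilon>>0. \<forall>h. 0 < h \<and> h < \<epsilon> \<longrightarrow> g (u + \<sigma> * h) = g u + of_int c * h)"

definition ord :: "('v, 'e) mgraph \<Rightarrow> (('v, 'e) gpoint \<Rightarrow> real) \<Rightarrow> ('v, 'e) gpoint \<Rightarrow> int" where
  "ord G f x = (case x of
      Vert v \<Rightarrow> (\<Sum>e\<in>{e\<in>edges G. src G e = v}. out_slope (edge_fun G f e) 0 1)
              + (\<Sum>e\<in>{e\<in>edges G. tgt G e = v}. out_slope (edge_fun G f e) (len G e) (-1))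
    | EPt e t \<Rightarrow> out_slope (edge_fun G f e) t 1 + out_slope (edge_fun G f e) t (-1))"

definition principal_div :: "('v, 'e) mgraph \<Rightarrow> (('v, 'e) gpoint \<Rightarrow> real) \<Rightarrow> ('v, 'e) gpoint \<Rightarrow> int" where
  "principal_div G f x = (if x \<in> gpoints G then ord G f x else 0)"

definition R_space :: "('v, 'e) mgraph \<Rightarrow> (('v, 'e) gpoint \<Rightarrow> int) \<Rightarrow> (('v, 'e) gpoint \<Rightarrow> real) set" where
  "R_space G D = {f. is_rational G f \<and> effective (\<lambda>x. D x + principal_div G f x)}"

definition lin_sys :: "('v, 'e) mgraph \<Rightarrow> (('v, 'e) gpoint \<Rightarrow> int) \<Rightarrow> (('v, 'e) gpoint \<Rightarrow> int) set" where
  "lin_sys G D = {(\<lambda>x. D x + principal_div G f x) | f. f \<in> R_space G D}"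

text \<open>Cell data: d_v for each vertex, an ordered partition (list of positive integers; empty list
  = no partition) for each edge, and an integer m_e for each edge.\<close>
type_synonym ('v, 'e) cell_data = "('v \<Rightarrow> nat) \<times> ('e \<Rightarrow> nat list) \<times> ('e \<Rightarrow> int)"

definition valid_cell_data :: "('v, 'e) mgraph \<Rightarrow> ('v, 'e) cell_data \<Rightarrow> bool" where
  "valid_cell_data G c = (case c of (dv, pa, m) \<Rightarrow> (\<forall>e\<in>edges G. \<forall>k\<in>set (pa e). 0 < k))"

definition in_cell :: "('v, 'e) mgraph \<Rightarrow> (('v, 'e) gpoint \<Rightarrow> int) \<Rightarrow> ('v, 'e) cell_data \<Rightarrow> (('v, 'e) gpoint \<Rightarrow> int) \<Rightarrow> bool" where
  "in_cell G D c L = (case c of (dv, pa, m) \<Rightarrow>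
     (\<forall>v\<in>verts G. L (Vert v) = int (dv v)) \<and>
     (\<forall>e\<in>edges G. \<exists>xs. length xs = length (pa e) \<and> sorted_wrt (<) xs \<and>
         (\<forall>x\<in>set xs. 0 < x \<and> x < len G e) \<and>
         (\<forall>i<length xs. L (EPt e (xs ! i)) = int (pa e ! i)) \<and>
         (\<forall>t. 0 < t \<and> t < len G e \<and> t \<notin> set xs \<longrightarrow> L (EPt e t) = 0)) \<and>
     (\<forall>f\<in>R_space G D. (\<lambda>x. D x + principal_div G f x) = L \<longrightarrow>
         (\<forall>e\<in>edges G. out_slope (edge_fun G f e) 0 1 = m e)))"

definition cell :: "('v, 'e) mgraph \<Rightarrow> (('v, 'e) gpoint \<Rightarrow> int) \<Rightarrow> ('v, 'e) cell_data \<Rightarrow> (('v, 'e) gpoint \<Rightarrow> int) set" where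
  "cell G D c = {L \<in> lin_sys G D. in_cell G D c L}"

definition I_set :: "('v, 'e) mgraph \<Rightarrow> (('v, 'e) gpoint \<Rightarrow> int) \<Rightarrow> ('v, 'e) gpoint set" where
  "I_set G L = {x \<in> gpoints G. x \<notin> Vert ` verts G \<and> 0 < L x}"

text \<open>Dimension of a cell, via the Haase--Musiker--Yu fact: one less than the number of
  connected components of the graph minus I_L, for a representative L.\<close>
definition cell_dim :: "('v, 'e) mgraph \<Rightarrow> (('v, 'e) gpoint \<Rightarrow> int) \<Rightarrow> ('v, 'e) cell_data \<Rightarrow> int" where
  "cell_dim G D c = int (num_components G (I_set G (SOME L. L \<in> cell G D c))) - 1"

definition linsys_dim :: "('v, 'e) mgraph \<Rightarrow> (('v, 'e) gpoint \<Rightarrow> int) \<Rightarrow> int" where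
  "linsys_dim G D = Max {cell_dim G D c | c. valid_cell_data G c \<and> cell G D c \<noteq> {}}"

end

theory Submission
  imports Defs
begin

text \<open>For \<open>L = D + (f)\<close> in \<open>|D|\<close> every point of \<open>I_L\<close> carries positive weight in \<open>L\<close>,
  and the degree of a principal divisor is zero, so \<open>|I_L| \<le> deg L = deg D\<close>. Cutting a metric
  graph at one interior point of an edge raises the number of connected components by at most one,
  so \<open>\<Gamma> - I_L\<close> has at most \<open>1 + |I_L|\<close> components; if \<open>\<Gamma>\<close> is 2-connected the first cut
  does not disconnect, which saves one. That \<open>|D|\<close> has a cell at all (so that the maximum is
  meaningful) uses \<open>D\<close> itself: its slope data are well defined because a rational function
  with zero divisor is constant, by the maximum principle.\<close>

section \<open>Piecewise linear functions on an interval\<close>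

definition slope_on :: "(real \<Rightarrow> real) \<Rightarrow> int \<Rightarrow> real \<Rightarrow> real \<Rightarrow> bool" where
  "slope_on g c a b \<longleftrightarrow> (\<forall>u\<in>{a..b}. g u = g a + of_int c * (u - a))"

definition consecutive_in :: "'a::linorder set \<Rightarrow> 'a \<Rightarrow> 'a \<Rightarrow> bool" where
  "consecutive_in B a b \<longleftrightarrow> a \<in> B \<and> b \<in> B \<and> a < b \<and> {a<..<b} \<inter> B = {}"

definition piecewise_linear :: "(real \<Rightarrow> real) \<Rightarrow> real \<Rightarrow> real set \<Rightarrow> bool" where
  "piecewise_linear g l B \<longleftrightarrow> finite B \<and> 0 \<in> B \<and> l \<in> B \<and> B \<subseteq> {0..l} \<and>
     (\<forall>a b. consecutive_in B a b \<longrightarrow> (\<exists>c. slope_on g c a b))"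

lemma is_rational_iff_piecewise_linear:
  "is_rational G f \<longleftrightarrow> (\<forall>e\<in>edges G. \<exists>B. piecewise_linear (edge_fun G f e) (len G e) B)"
  unfolding is_rational_def piecewise_linear_def consecutive_in_def slope_on_def
  by (simp add: Ball_def imp_conjL)

lemma out_slope_eqI:
  assumes "0 < \<epsilon>" and "\<And>h. 0 < h \<Longrightarrow> h < \<epsilon> \<Longrightarrow> g (u + \<sigma> * h) = g u + of_int c * h"
  shows "out_slope g u \<sigma> = c"
  unfolding out_slope_def
proof (rule the_equality)
  show "\<exists>\<epsilon>>0. \<forall>h. 0 < h \<and> h < \<epsilon> \<longrightarrow> g (u + \<sigma> * h) = g u + of_int c * h"
    using assms by blast
next
  fix c' :: int
  assume "\<exists>\<epsilon>'>0. \<forall>h. 0 < h \<and> h < \<epsilon>' \<longrightarrow> g (u + \<sigma> * h) = g u + of_int c' * h"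
  then obtain \<epsilon>' where "0 < \<epsilon>'" and c': "\<And>h. 0 < h \<and> h < \<epsilon>' \<Longrightarrow> g (u + \<sigma> * h) = g u + of_int c' * h"
    by blast
  define h where "h = min \<epsilon> \<epsilon>' / 2"
  have "0 < h" "h < \<epsilon>" "h < \<epsilon>'" using assms(1) \<open>0 < \<epsilon>'\<close> by (auto simp: h_def)
  then have "g u + of_int c' * h = g u + of_int c * h" using c'[of h] assms(2)[of h] by simp
  with \<open>0 < h\<close> show "c' = c" by simp
qed

lemma slope_onD:
  "slope_on g c a b \<Longrightarrow> a \<le> u \<Longrightarrow> u \<le> b \<Longrightarrow> g u = g a + of_int c * (u - a)"
  unfolding slope_on_def by (meson atLeastAtMost_iff)

lemma slope_on_out_slope_right:
  assumes "slope_on g c a b" "a \<le> u" "u < b"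
  shows "out_slope g u 1 = c"
proof (rule out_slope_eqI)
  show "0 < b - u" using assms by simp
  fix h :: real assume "0 < h" "h < b - u"
  then have "g (u + h) = g a + of_int c * (u + h - a)" "g u = g a + of_int c * (u - a)"
    using assms by (auto intro!: slope_onD[OF assms(1)])
  then show "g (u + 1 * h) = g u + of_int c * h" by (simp add: algebra_simps)
qed

lemma slope_on_out_slope_left:
  assumes "slope_on g c a b" "a < u" "u \<le> b"
  shows "out_slope g u (-1) = - c"
proof (rule out_slope_eqI)
  show "0 < u - a" using assms by simp
  fix h :: real assume "0 < h" "h < u - a"
  then have "g (u - h) = g a + of_int c * (u - h - a)" "g u = g a + of_int c * (u - a)"
    using assms by (auto intro!: slope_onD[OF assms(1)])
  then show "g (u + -1 * h) = g u + of_int (- c) * h" by (simp add: algebra_simps)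
qed

lemma slope_on_subinterval:
  assumes "slope_on g c a b" "a \<le> a'" "b' \<le> b"
  shows "slope_on g c a' b'"
  unfolding slope_on_def
proof
  fix u assume "u \<in> {a'..b'}"
  then have "g u = g a + of_int c * (u - a)" "g a' = g a + of_int c * (a' - a)"
    using assms by (auto intro!: slope_onD[OF assms(1)])
  then show "g u = g a' + of_int c * (u - a')" by (simp add: algebra_simps)
qed

lemma finite_gap_above:
  fixes B :: "'a::linorder set"
  assumes "finite B" "z \<in> B" "u < z"
  obtains b where "b \<in> B" "u < b" "b \<le> z" "{u<..<b} \<inter> B = {}"
proof
  let ?A = "{y\<in>B. u < y}"
  have "finite ?A" "z \<in> ?A" using assms by auto
  then have "Min ?A \<in> ?A" "\<And>y. y \<in> ?A \<Longrightarrow> Min ?A \<le> y" using Min_in by auto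
  then show "Min ?A \<in> B" "u < Min ?A" "Min ?A \<le> z" "{u<..<Min ?A} \<inter> B = {}"
    using \<open>z \<in> ?A\<close> by (auto simp: not_le[symmetric])
qed

lemma finite_gap_below:
  fixes B :: "'a::linorder set"
  assumes "finite B" "z \<in> B" "z < u"
  obtains a where "a \<in> B" "a < u" "z \<le> a" "{a<..<u} \<inter> B = {}"
proof
  let ?A = "{y\<in>B. y < u}"
  have "finite ?A" "z \<in> ?A" using assms by auto
  then have "Max ?A \<in> ?A" "\<And>y. y \<in> ?A \<Longrightarrow> y \<le> Max ?A" using Max_in by auto
  then show "Max ?A \<in> B" "Max ?A < u" "z \<le> Max ?A" "{Max ?A<..<u} \<inter> B = {}"
    using \<open>z \<in> ?A\<close> by (auto simp: not_le[symmetric])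
qed

lemma piecewise_linear_slope_on_gap:
  assumes pl: "piecewise_linear g l B" and "0 \<le> a" "a < b" "b \<le> l" "{a<..<b} \<inter> B = {}"
  obtains c where "slope_on g c a b"
proof -
  have fin: "finite B" and "0 \<in> B" "l \<in> B"
    and pieces: "\<And>a b. consecutive_in B a b \<Longrightarrow> \<exists>c. slope_on g c a b"
    using pl by (auto simp: piecewise_linear_def)
  let ?A = "{y\<in>B. y \<le> a}" and ?C = "{y\<in>B. b \<le> y}"
  have "finite ?A" "0 \<in> ?A" "finite ?C" "l \<in> ?C"
    using fin \<open>0 \<in> B\<close> \<open>l \<in> B\<close> assms(2,4) by auto
  then have A: "Max ?A \<in> ?A" "\<And>y. y \<in> ?A \<Longrightarrow> y \<le> Max ?A"
    and C: "Min ?C \<in> ?C" "\<And>y. y \<in> ?C \<Longrightarrow> Min ?C \<le> y"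
    using Max_in Min_in by auto
  have "consecutive_in B (Max ?A) (Min ?C)"
    unfolding consecutive_in_def
  proof (intro conjI)
    show "{Max ?A<..<Min ?C} \<inter> B = {}"
    proof (rule ccontr)
      assume "{Max ?A<..<Min ?C} \<inter> B \<noteq> {}"
      then obtain y where "y \<in> B" "Max ?A < y" "y < Min ?C" by auto
      with A(2)[of y] C(2)[of y] have "y \<in> {a<..<b}" by (auto simp: not_le[symmetric])
      with \<open>y \<in> B\<close> assms(5) show False by blast
    qed
  qed (use A C assms(3) in auto)
  then obtain c where "slope_on g c (Max ?A) (Min ?C)" using pieces by blast
  then have "slope_on g c a b" by (rule slope_on_subinterval) (use A C in auto)
  then show ?thesis by (rule that)
qed

lemma piecewise_linear_right_piece:
  assumes pl: "piecewise_linear g l B" and "0 \<le> u" "u < l"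
  obtains b c where "u < b" "b \<le> l" "slope_on g c u b"
proof -
  have "finite B" "l \<in> B" using pl by (auto simp: piecewise_linear_def)
  then obtain b where "u < b" "b \<le> l" "{u<..<b} \<inter> B = {}"
    using finite_gap_above assms(3) by metis
  with piecewise_linear_slope_on_gap[OF pl] assms(2) that show ?thesis by metis
qed

lemma piecewise_linear_left_piece:
  assumes pl: "piecewise_linear g l B" and "0 < u" "u \<le> l"
  obtains a c where "0 \<le> a" "a < u" "slope_on g c a u"
proof -
  have "finite B" "0 \<in> B" using pl by (auto simp: piecewise_linear_def)
  then obtain a where "a < u" "0 \<le> a" "{a<..<u} \<inter> B = {}"
    using finite_gap_below assms(2) by metis
  with piecewise_linear_slope_on_gap[OF pl] assms(3) that show ?thesis by metis
qed

lemma piecewise_linear_piece_around: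
  assumes pl: "piecewise_linear g l B" and "0 \<le> u" "u \<le> l" "u \<notin> B"
  obtains a b c where "a \<in> B" "b \<in> B" "a < u" "u < b" "slope_on g c a b"
proof -
  have fin: "finite B" and "0 \<in> B" "l \<in> B" "B \<subseteq> {0..l}"
    using pl by (auto simp: piecewise_linear_def)
  then have "0 < u" "u < l" using assms(2-4) by (auto simp: less_le)
  obtain a where a: "a \<in> B" "a < u" "{a<..<u} \<inter> B = {}"
    using finite_gap_below[OF fin \<open>0 \<in> B\<close> \<open>0 < u\<close>] by metis
  obtain b where b: "b \<in> B" "u < b" "{u<..<b} \<inter> B = {}"
    using finite_gap_above[OF fin \<open>l \<in> B\<close> \<open>u < l\<close>] by metis
  have "{a<..<b} \<inter> B = {}"
  proof -
    have "{a<..<b} \<subseteq> {a<..<u} \<union> {u} \<union> {u<..<b}" by auto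
    then show ?thesis using a(3) b(3) assms(4) by blast
  qed
  moreover have "0 \<le> a" "b \<le> l" using a(1) b(1) \<open>B \<subseteq> {0..l}\<close> by auto
  ultimately obtain c where "slope_on g c a b"
    using piecewise_linear_slope_on_gap[OF pl] a(2) b(2) by (metis order.strict_trans)
  with a b that show ?thesis by blast
qed

lemma piecewise_linear_out_slopes_cancel:
  assumes "piecewise_linear g l B" "0 \<le> u" "u \<le> l" "u \<notin> B"
  shows "out_slope g u 1 + out_slope g u (-1) = 0"
proof -
  obtain a b c where "a < u" "u < b" "slope_on g c a b"
    using piecewise_linear_piece_around[OF assms] by metis
  then show ?thesis using slope_on_out_slope_right slope_on_out_slope_left by fastforce
qed

lemma piecewise_linear_value_between:
  assumes pl: "piecewise_linear g l B" and "0 \<le> u" "u \<le> l"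
  obtains a b where "a \<in> B" "b \<in> B" "min (g a) (g b) \<le> g u" "g u \<le> max (g a) (g b)"
proof (cases "u \<in> B")
  case True
  then show ?thesis using that by auto
next
  case False
  then obtain a b c where ab: "a \<in> B" "b \<in> B" "a < u" "u < b" and c: "slope_on g c a b"
    using piecewise_linear_piece_around[OF assms] by metis
  have gu: "g u = g a + of_int c * (u - a)" and gb: "g b = g a + of_int c * (b - a)"
    using slope_onD[OF c, of u] slope_onD[OF c, of b] ab by auto
  have "u - a \<le> b - a" "0 \<le> u - a" using ab by auto
  then have "min 0 (of_int c * (b - a)) \<le> of_int c * (u - a) \<and>
             of_int c * (u - a) \<le> max 0 (of_int c * (b - a))"
  proof (cases "c \<ge> 0")
    case True
    then have "of_int c * (u - a) \<le> of_int c * (b - a)" "0 \<le> of_int c * (u - a)"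
      using \<open>u - a \<le> b - a\<close> \<open>0 \<le> u - a\<close> by (simp_all add: mult_left_mono)
    then show ?thesis by linarith
  next
    case False
    then have "of_int c * (b - a) \<le> of_int c * (u - a)" "of_int c * (u - a) \<le> 0"
      using \<open>u - a \<le> b - a\<close> \<open>0 \<le> u - a\<close> by (simp_all add: mult_left_mono_neg mult_nonpos_nonneg)
    then show ?thesis by linarith
  qed
  then show ?thesis using that[OF ab(1,2)] gu gb by linarith
qed

lemma out_slope_right_nonpos_at_max:
  assumes pl: "piecewise_linear g l B" and max: "\<forall>v\<in>{0..l}. g v \<le> g u" and "0 \<le> u" "u < l"
  shows "out_slope g u 1 \<le> 0"
proof -
  obtain b c where "u < b" "b \<le> l" and c: "slope_on g c u b"
    using piecewise_linear_right_piece[OF pl assms(3,4)] by metis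
  then have "g b \<le> g u" using max assms(3) by auto
  then have "of_int c * (b - u) \<le> 0" using slope_onD[OF c, of b] \<open>u < b\<close> by simp
  with \<open>u < b\<close> have "c \<le> 0" by (simp add: mult_le_0_iff)
  with slope_on_out_slope_right[OF c] \<open>u < b\<close> show ?thesis by simp
qed

lemma out_slope_left_nonpos_at_max:
  assumes pl: "piecewise_linear g l B" and max: "\<forall>v\<in>{0..l}. g v \<le> g u" and "0 < u" "u \<le> l"
  shows "out_slope g u (-1) \<le> 0"
proof -
  obtain a c where "0 \<le> a" "a < u" and c: "slope_on g c a u"
    using piecewise_linear_left_piece[OF pl assms(3,4)] by metis
  then have "g a \<le> g u" using max assms(4) by auto
  then have "0 \<le> of_int c * (u - a)" using slope_onD[OF c, of u] \<open>a < u\<close> by simp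
  with \<open>a < u\<close> have "0 \<le> c" by (simp add: zero_le_mult_iff)
  with slope_on_out_slope_left[OF c] \<open>a < u\<close> show ?thesis by simp
qed

lemma piecewise_linear_out_slope_sum_between:
  assumes pl: "piecewise_linear g l B" and "finite T" "T = B \<inter> {a<..<b}" "0 \<le> a" "a < b" "b \<le> l"
  shows "(\<Sum>t\<in>T. out_slope g t 1 + out_slope g t (-1)) = - out_slope g b (-1) - out_slope g a 1"
  using assms(2-)
proof (induction T arbitrary: b rule: finite_linorder_max_induct)
  case empty
  then have "{a<..<b} \<inter> B = {}" by blast
  with empty.prems obtain c where c: "slope_on g c a b"
    by (elim piecewise_linear_slope_on_gap[OF pl]) auto
  show ?case
    using slope_on_out_slope_right[OF c, of a] slope_on_out_slope_left[OF c, of b] empty.prems by simp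
next
  case (insert m T)
  have "m \<in> B \<inter> {a<..<b}" using insert.prems(1) by blast
  then have "m \<in> B" "a < m" "m < b" by auto
  have "T = B \<inter> {a<..<m}"
  proof
    have "T \<subseteq> B \<inter> {a<..<b}" using insert.prems(1) by blast
    then show "T \<subseteq> B \<inter> {a<..<m}" using insert.hyps(2) by auto
    show "B \<inter> {a<..<m} \<subseteq> T" using insert.prems(1) \<open>m < b\<close> by auto
  qed
  then have IH: "(\<Sum>t\<in>T. out_slope g t 1 + out_slope g t (-1)) = - out_slope g m (-1) - out_slope g a 1"
    using insert.IH \<open>a < m\<close> \<open>0 \<le> a\<close> \<open>m < b\<close> \<open>b \<le> l\<close> by simp
  have gap: "{m<..<b} \<inter> B = {}"
  proof (rule ccontr)
    assume "{m<..<b} \<inter> B \<noteq> {}"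
    then obtain x where "x \<in> B" "m < x" "x < b" by auto
    then have "x \<in> insert m T" using insert.prems(1) \<open>a < m\<close> by auto
    with insert.hyps(2) \<open>m < x\<close> show False by auto
  qed
  have "0 \<le> m" "b \<le> l" using \<open>a < m\<close> insert.prems by auto
  then obtain c where c: "slope_on g c m b"
    by (elim piecewise_linear_slope_on_gap[OF pl _ \<open>m < b\<close> _ gap])
  have "out_slope g m 1 = c" "out_slope g b (-1) = - c"
    using slope_on_out_slope_right[OF c, of m] slope_on_out_slope_left[OF c, of b] \<open>m < b\<close> by auto
  moreover have "m \<notin> T" using insert.hyps(2) by blast
  ultimately show ?case using IH insert.hyps(1) by simp
qed

lemma piecewise_linear_out_slope_sum:
  assumes pl: "piecewise_linear g l B" and "0 < l"
  shows "(\<Sum>t\<in>B \<inter> {0<..<l}. out_slope g t 1 + out_slope g t (-1)) = - out_slope g l (-1) - out_slope g 0 1"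
  by (rule piecewise_linear_out_slope_sum_between[OF pl _ refl])
    (use pl assms(2) in \<open>auto simp: piecewise_linear_def\<close>)

lemma finite_consecutive_change:
  fixes B :: "'a::linorder set"
  assumes fin: "finite B" and "x \<in> B" "y \<in> B" "P x" "\<not> P y"
  obtains a b where "consecutive_in B a b" "P a \<noteq> P b"
proof -
  have change: "\<exists>a b. consecutive_in B a b \<and> Q a \<noteq> Q b"
    if "x \<in> B" "y \<in> B" "x < y" "Q x" "\<not> Q y" for Q x y
  proof -
    let ?A = "{z\<in>B. z \<le> y \<and> Q z}"
    have "finite ?A" "x \<in> ?A" using fin that by auto
    then have A: "Max ?A \<in> ?A" "\<And>z. z \<in> ?A \<Longrightarrow> z \<le> Max ?A" using Max_in by auto
    then have "Max ?A < y" using that(5) by (metis (mono_tags, lifting) mem_Collect_eq order_less_le)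
    then obtain b where b: "b \<in> B" "Max ?A < b" "b \<le> y" "{Max ?A<..<b} \<inter> B = {}"
      by (rule finite_gap_above[OF fin \<open>y \<in> B\<close>])
    have "\<not> Q b" using A(2)[of b] b by auto
    then show ?thesis using A(1) b unfolding consecutive_in_def by blast
  qed
  have "x \<noteq> y" using assms(4,5) by auto
  then consider "x < y" | "y < x" by (rule linorder_neqE)
  then show ?thesis
  proof cases
    case 1 then show ?thesis using change[of x y P] assms that by blast
  next
    case 2 then show ?thesis using change[of y x "\<lambda>z. \<not> P z"] assms that by blast
  qed
qed

text \<open>A maximum value propagates between consecutive breakpoints: a linear piece with value
  \<open>M\<close> at one end has slope 0 there, hence value \<open>M\<close> at the other end.\<close>

lemma piecewise_linear_constant_from_max:
  assumes pl: "piecewise_linear g l B"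
    and le_max: "\<forall>z\<in>B. g z \<le> M"
    and flat: "\<forall>z\<in>B. g z = M \<longrightarrow> (z < l \<longrightarrow> out_slope g z 1 = 0) \<and> (0 < z \<longrightarrow> out_slope g z (-1) = 0)"
    and "0 \<le> s" "s \<le> l" "g s = M"
  shows "\<forall>u\<in>{0..l}. g u = M"
proof -
  have fin: "finite B" and "B \<subseteq> {0..l}"
    and pieces: "\<And>a b. consecutive_in B a b \<Longrightarrow> \<exists>c. slope_on g c a b"
    using pl by (auto simp: piecewise_linear_def)
  have propagate: "g a = M \<longleftrightarrow> g b = M" if ab: "consecutive_in B a b" for a b
  proof -
    obtain c where c: "slope_on g c a b" using pieces[OF ab] by blast
    have ab': "a < b" "0 \<le> a" "b \<le> l" using ab \<open>B \<subseteq> {0..l}\<close> by (auto simp: consecutive_in_def)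
    have "out_slope g a 1 = c" "out_slope g b (-1) = - c"
      using slope_on_out_slope_right[OF c] slope_on_out_slope_left[OF c] ab' by auto
    moreover have "g b = g a + of_int c * (b - a)" using slope_onD[OF c, of b] ab' by simp
    moreover have "a \<in> B" "b \<in> B" using ab by (auto simp: consecutive_in_def)
    ultimately show ?thesis using flat ab' by auto
  qed
  have "\<exists>z\<in>B. g z = M"
  proof -
    obtain a b where "a \<in> B" "b \<in> B" "g s \<le> max (g a) (g b)"
      using piecewise_linear_value_between[OF pl \<open>0 \<le> s\<close> \<open>s \<le> l\<close>] by metis
    then show ?thesis using le_max \<open>g s = M\<close> by (metis antisym max_def)
  qed
  then obtain z where "z \<in> B" "g z = M" by blast
  have all_breakpoints: "\<forall>y\<in>B. g y = M"
  proof (rule ccontr)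
    assume "\<not> (\<forall>y\<in>B. g y = M)"
    then obtain y where "y \<in> B" "g y \<noteq> M" by blast
    with finite_consecutive_change[OF fin \<open>z \<in> B\<close>, of y "\<lambda>z. g z = M"] \<open>g z = M\<close> propagate
    show False by blast
  qed
  show ?thesis
  proof
    fix u assume "u \<in> {0..l}"
    then obtain a b where "a \<in> B" "b \<in> B" "min (g a) (g b) \<le> g u" "g u \<le> max (g a) (g b)"
      using piecewise_linear_value_between[OF pl] by (metis atLeastAtMost_iff)
    then show "g u = M" using all_breakpoints by auto
  qed
qed

lemma epos_0 [simp]: "epos G e 0 = Vert (src G e)"
  by (simp add: epos_def)

lemma epos_len: "0 < len G e \<Longrightarrow> epos G e (len G e) = Vert (tgt G e)"
  by (simp add: epos_def)

lemma epos_interior: "0 < u \<Longrightarrow> u < len G e \<Longrightarrow> epos G e u = EPt e u"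
  by (simp add: epos_def)

lemma epos_eq_EPt_iff: "epos G e' u = EPt e t \<longleftrightarrow> e' = e \<and> u = t \<and> u \<noteq> 0 \<and> u \<noteq> len G e"
  by (auto simp: epos_def)

lemma epos_in_gpoints:
  assumes "metric_graph G" "e \<in> edges G" "0 \<le> u" "u \<le> len G e"
  shows "epos G e u \<in> gpoints G"
  using assms unfolding metric_graph_def epos_def gpoints_def by auto

lemma gpoints_cases [consumes 1, case_names Vert EPt]:
  assumes "x \<in> gpoints G"
  obtains v where "x = Vert v" "v \<in> verts G"
  | e t where "x = EPt e t" "e \<in> edges G" "0 < t" "t < len G e"
  using assms unfolding gpoints_def by blast

lemma ord_Vert:
  "ord G f (Vert v) = (\<Sum>e\<in>{e\<in>edges G. src G e = v}. out_slope (edge_fun G f e) 0 1)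
     + (\<Sum>e\<in>{e\<in>edges G. tgt G e = v}. out_slope (edge_fun G f e) (len G e) (-1))"
  by (simp add: ord_def)

lemma ord_EPt: "ord G f (EPt e t) = out_slope (edge_fun G f e) t 1 + out_slope (edge_fun G f e) t (-1)"
  by (simp add: ord_def)

definition components :: "('v, 'e) mgraph \<Rightarrow> ('v, 'e) gpoint set \<Rightarrow> ('v, 'e) gpoint set set" where
  "components G S = (gpoints G - S) // (seg_rel G S)\<^sup>*"

lemma num_components_eq_card: "num_components G S = card (components G S)"
  by (simp add: num_components_def components_def)

lemma num_components_1_rtrancl:
  assumes "num_components G S = 1" "x \<in> gpoints G - S" "y \<in> gpoints G - S"
  shows "(x, y) \<in> (seg_rel G S)\<^sup>*"
proof -
  obtain K where K: "components G S = {K}"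
    using assms(1) card_1_singletonE by (metis num_components_eq_card)
  have "(seg_rel G S)\<^sup>* `` {x} \<in> components G S" "(seg_rel G S)\<^sup>* `` {y} \<in> components G S"
    using assms(2,3) unfolding components_def by (auto intro: quotientI)
  then have "(seg_rel G S)\<^sup>* `` {x} = (seg_rel G S)\<^sup>* `` {y}" using K by auto
  then show ?thesis by auto
qed

lemma metric_graph_gpoints_nonempty: "metric_graph G \<Longrightarrow> gpoints G \<noteq> {}"
  unfolding metric_graph_def num_components_def by auto

section \<open>Harmonic rational functions are constant\<close>

lemma sum_nonpos_eq_0_iff:
  fixes f :: "'a \<Rightarrow> 'b::ordered_ab_group_add"
  assumes "finite A" "\<forall>x\<in>A. f x \<le> 0"
  shows "sum f A = 0 \<longleftrightarrow> (\<forall>x\<in>A. f x = 0)"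
  using sum_nonneg_eq_0_iff[of A "\<lambda>x. - f x"] assms by (simp add: sum_negf)

lemma harmonic_vertex_slopes_zero:
  assumes mg: "metric_graph G"
    and pl: "\<forall>e\<in>edges G. piecewise_linear (edge_fun G f e) (len G e) (Bf e)"
    and max: "\<forall>x\<in>gpoints G. f x \<le> f (Vert v)"
    and "v \<in> verts G" and harm: "ord G f (Vert v) = 0"
  shows "\<forall>e\<in>{e\<in>edges G. src G e = v}. out_slope (edge_fun G f e) 0 1 = 0"
    and "\<forall>e\<in>{e\<in>edges G. tgt G e = v}. out_slope (edge_fun G f e) (len G e) (-1) = 0"
proof -
  have fin: "finite (edges G)" and lpos: "\<forall>e\<in>edges G. 0 < len G e"
    using mg by (auto simp: metric_graph_def)
  have edge_max: "\<forall>u\<in>{0..len G e}. edge_fun G f e u \<le> f (Vert v)" if "e \<in> edges G" for e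
    using max epos_in_gpoints[OF mg that] by (simp add: edge_fun_def)
  have out: "\<forall>e\<in>{e\<in>edges G. src G e = v}. out_slope (edge_fun G f e) 0 1 \<le> 0"
  proof
    fix e assume e: "e \<in> {e\<in>edges G. src G e = v}"
    then show "out_slope (edge_fun G f e) 0 1 \<le> 0"
      using out_slope_right_nonpos_at_max[OF pl[rule_format]] edge_max lpos
      by (simp add: edge_fun_def)
  qed
  have "in": "\<forall>e\<in>{e\<in>edges G. tgt G e = v}. out_slope (edge_fun G f e) (len G e) (-1) \<le> 0"
  proof
    fix e assume e: "e \<in> {e\<in>edges G. tgt G e = v}"
    then show "out_slope (edge_fun G f e) (len G e) (-1) \<le> 0"
      using out_slope_left_nonpos_at_max[OF pl[rule_format]] edge_max lpos
      by (simp add: edge_fun_def epos_len)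
  qed
  have "(\<Sum>e\<in>{e\<in>edges G. src G e = v}. out_slope (edge_fun G f e) 0 1) \<le> 0"
    "(\<Sum>e\<in>{e\<in>edges G. tgt G e = v}. out_slope (edge_fun G f e) (len G e) (-1)) \<le> 0"
    using out "in" by (auto intro: sum_nonpos)
  then have "(\<Sum>e\<in>{e\<in>edges G. src G e = v}. out_slope (edge_fun G f e) 0 1) = 0"
    "(\<Sum>e\<in>{e\<in>edges G. tgt G e = v}. out_slope (edge_fun G f e) (len G e) (-1)) = 0"
    using harm unfolding ord_Vert by linarith+
  then show "\<forall>e\<in>{e\<in>edges G. src G e = v}. out_slope (edge_fun G f e) 0 1 = 0"
    and "\<forall>e\<in>{e\<in>edges G. tgt G e = v}. out_slope (edge_fun G f e) (len G e) (-1) = 0"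
    using sum_nonpos_eq_0_iff[OF _ out] sum_nonpos_eq_0_iff[OF _ "in"] fin by simp_all
qed

lemma harmonic_edge_slopes_zero_at_max:
  assumes mg: "metric_graph G"
    and pl: "\<forall>e\<in>edges G. piecewise_linear (edge_fun G f e) (len G e) (Bf e)"
    and harm: "\<forall>x\<in>gpoints G. ord G f x = 0" and max: "\<forall>x\<in>gpoints G. f x \<le> M"
    and e: "e \<in> edges G" and u: "0 \<le> u" "u \<le> len G e" and at_max: "edge_fun G f e u = M"
  shows "(u < len G e \<longrightarrow> out_slope (edge_fun G f e) u 1 = 0) \<and>
         (0 < u \<longrightarrow> out_slope (edge_fun G f e) u (-1) = 0)"
proof -
  let ?g = "edge_fun G f e"
  have "0 < len G e" using mg e by (simp add: metric_graph_def)
  have vertex_max: "\<forall>x\<in>gpoints G. f x \<le> f (Vert v)" if "f (Vert v) = M" for v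
    using max that by simp
  consider "u = 0" | "u = len G e" | "0 < u" "u < len G e" using u by linarith
  then show ?thesis
  proof cases
    case 1
    have "src G e \<in> verts G" using mg e by (auto simp: metric_graph_def)
    moreover from this have "ord G f (Vert (src G e)) = 0" using harm by (simp add: gpoints_def)
    ultimately show ?thesis
      using harmonic_vertex_slopes_zero(1)[OF mg pl vertex_max] at_max 1 e
      by (simp add: edge_fun_def)
  next
    case 2
    have "tgt G e \<in> verts G" using mg e by (auto simp: metric_graph_def)
    moreover from this have "ord G f (Vert (tgt G e)) = 0" using harm by (simp add: gpoints_def)
    ultimately show ?thesis
      using harmonic_vertex_slopes_zero(2)[OF mg pl vertex_max] at_max 2 e \<open>0 < len G e\<close>
      by (simp add: edge_fun_def epos_len)
  next
    case 3
    have "\<forall>v\<in>{0..len G e}. ?g v \<le> ?g u"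
      using max epos_in_gpoints[OF mg e] at_max by (simp add: edge_fun_def)
    then have "out_slope ?g u 1 \<le> 0" "out_slope ?g u (-1) \<le> 0"
      using out_slope_right_nonpos_at_max out_slope_left_nonpos_at_max pl e 3 by auto
    moreover have "EPt e u \<in> gpoints G" using e 3 by (simp add: gpoints_def)
    with harm have "out_slope ?g u 1 + out_slope ?g u (-1) = 0" by (simp add: ord_EPt[symmetric])
    ultimately show ?thesis by simp
  qed
qed

lemma harmonic_rational_constant:
  assumes mg: "metric_graph G" and "is_rational G f" and harm: "\<forall>x\<in>gpoints G. ord G f x = 0"
  obtains M where "\<forall>x\<in>gpoints G. f x = M"
proof -
  obtain Bf where pl: "\<forall>e\<in>edges G. piecewise_linear (edge_fun G f e) (len G e) (Bf e)"
    using \<open>is_rational G f\<close> unfolding is_rational_iff_piecewise_linear by metis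
  define K where "K = Vert ` verts G \<union> (\<Union>e\<in>edges G. epos G e ` Bf e)"
  have "finite K"
    using mg pl by (auto simp: K_def metric_graph_def piecewise_linear_def)
  have K_gpoints: "K \<subseteq> gpoints G"
  proof -
    have "epos G e ` Bf e \<subseteq> gpoints G" if "e \<in> edges G" for e
    proof -
      have "Bf e \<subseteq> {0..len G e}" using pl that by (simp add: piecewise_linear_def)
      then show ?thesis using epos_in_gpoints[OF mg that] by auto
    qed
    then show ?thesis unfolding K_def gpoints_def by blast
  qed
  have "K \<noteq> {}"
  proof -
    obtain x where "x \<in> gpoints G" using metric_graph_gpoints_nonempty[OF mg] by blast
    then show ?thesis
      by (cases rule: gpoints_cases) (use pl in \<open>auto simp: K_def piecewise_linear_def\<close>)
  qed
  define M where "M = Max (f ` K)"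
  have le_M: "\<forall>x\<in>gpoints G. f x \<le> M"
  proof
    fix x assume "x \<in> gpoints G"
    then show "f x \<le> M"
    proof (cases rule: gpoints_cases)
      case (Vert v)
      then show ?thesis using \<open>finite K\<close> by (auto simp: M_def K_def)
    next
      case (EPt e t)
      obtain a b where "a \<in> Bf e" "b \<in> Bf e" "edge_fun G f e t \<le> max (edge_fun G f e a) (edge_fun G f e b)"
        using piecewise_linear_value_between[of "edge_fun G f e"] pl EPt by (metis less_imp_le)
      moreover have "epos G e a \<in> K" "epos G e b \<in> K"
        using \<open>a \<in> Bf e\<close> \<open>b \<in> Bf e\<close> EPt(2) unfolding K_def by blast+
      then have "f (epos G e a) \<le> M" "f (epos G e b) \<le> M"
        using \<open>finite K\<close> by (simp_all add: M_def)
      ultimately show ?thesis using EPt by (simp add: edge_fun_def epos_interior)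
    qed
  qed
  have "M \<in> f ` K" unfolding M_def using \<open>finite K\<close> \<open>K \<noteq> {}\<close> by (intro Max_in) auto
  then obtain x0 where "x0 \<in> gpoints G" "f x0 = M" using K_gpoints by auto
  have edge_const: "\<forall>u\<in>{0..len G e}. edge_fun G f e u = M"
    if e: "e \<in> edges G" and s: "0 \<le> s" "s \<le> len G e" "edge_fun G f e s = M" for e s
  proof (rule piecewise_linear_constant_from_max[OF pl[rule_format, OF e] _ _ s])
    have "Bf e \<subseteq> {0..len G e}" using pl e by (simp add: piecewise_linear_def)
    then show "\<forall>z\<in>Bf e. edge_fun G f e z \<le> M"
      using le_M epos_in_gpoints[OF mg e] by (auto simp: edge_fun_def)
    show "\<forall>z\<in>Bf e. edge_fun G f e z = M \<longrightarrow>
        (z < len G e \<longrightarrow> out_slope (edge_fun G f e) z 1 = 0) \<and> (0 < z \<longrightarrow> out_slope (edge_fun G f e) z (-1) = 0)"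
      using harmonic_edge_slopes_zero_at_max[OF mg pl harm le_M e] \<open>Bf e \<subseteq> {0..len G e}\<close> by auto
  qed
  have "f x = M" if "x \<in> gpoints G" for x
  proof -
    have "num_components G {} = 1" using mg by (simp add: metric_graph_def)
    then have "(x0, x) \<in> (seg_rel G {})\<^sup>*"
      using num_components_1_rtrancl \<open>x0 \<in> gpoints G\<close> that by blast
    then show ?thesis
    proof (induction rule: rtrancl_induct)
      case base
      show ?case by fact
    next
      case (step y z)
      then obtain e s t where "y = epos G e s" "z = epos G e t" "e \<in> edges G"
        "0 \<le> s" "s \<le> len G e" "0 \<le> t" "t \<le> len G e" unfolding seg_rel_def by blast
      with edge_const[of e s] step.IH show ?case by (simp add: edge_fun_def)
    qed
  qed
  with that show ?thesis by blast
qed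

section \<open>The degree of a principal divisor\<close>

lemma div_deg_eq_sum:
  assumes "finite A" "supp D \<subseteq> A"
  shows "div_deg D = (\<Sum>x\<in>A. D x)"
  unfolding div_deg_def using assms by (intro sum.mono_neutral_left) (auto simp: supp_def)

lemma sum_ord_verts:
  assumes "metric_graph G"
  shows "(\<Sum>v\<in>verts G. ord G f (Vert v)) =
         (\<Sum>e\<in>edges G. out_slope (edge_fun G f e) 0 1 + out_slope (edge_fun G f e) (len G e) (-1))"
proof -
  have fin: "finite (verts G)" "finite (edges G)"
    and "src G ` edges G \<subseteq> verts G" "tgt G ` edges G \<subseteq> verts G"
    using assms by (auto simp: metric_graph_def)
  then have "(\<Sum>v\<in>verts G. \<Sum>e\<in>{e\<in>edges G. src G e = v}. out_slope (edge_fun G f e) 0 1) =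
               (\<Sum>e\<in>edges G. out_slope (edge_fun G f e) 0 1)"
    "(\<Sum>v\<in>verts G. \<Sum>e\<in>{e\<in>edges G. tgt G e = v}. out_slope (edge_fun G f e) (len G e) (-1)) =
               (\<Sum>e\<in>edges G. out_slope (edge_fun G f e) (len G e) (-1))"
    by (auto intro: sum.group)
  then show ?thesis unfolding ord_Vert sum.distrib by simp
qed

lemma principal_div_degree_zero:
  fixes G :: "('v, 'e) mgraph"
  assumes mg: "metric_graph G" and "is_rational G f"
  shows "finite (supp (principal_div G f))" and "div_deg (principal_div G f) = 0"
proof -
  obtain Bf where pl: "\<forall>e\<in>edges G. piecewise_linear (edge_fun G f e) (len G e) (Bf e)"
    using \<open>is_rational G f\<close> unfolding is_rational_iff_piecewise_linear by metis
  have fin: "finite (verts G)" "finite (edges G)" and lpos: "\<forall>e\<in>edges G. 0 < len G e"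
    using mg by (auto simp: metric_graph_def)
  let ?rd = "\<lambda>e. out_slope (edge_fun G f e) 0 1"
  let ?ld = "\<lambda>e. out_slope (edge_fun G f e) (len G e) (-1)"
  define Sg where "Sg = (SIGMA e:edges G. Bf e \<inter> {0<..<len G e})"
  define P :: "('v, 'e) gpoint set" where "P = (\<lambda>(e, t). EPt e t) ` Sg"
  have "finite Sg" unfolding Sg_def using fin pl by (auto simp: piecewise_linear_def)
  then have "finite P" by (simp add: P_def)
  have inj: "inj_on (\<lambda>(e, t). EPt e t :: ('v, 'e) gpoint) Sg" by (auto simp: inj_on_def)
  have supp_sub: "supp (principal_div G f) \<subseteq> Vert ` verts G \<union> P"
  proof
    fix x assume x: "x \<in> supp (principal_div G f)"
    then have "x \<in> gpoints G" by (auto simp: supp_def principal_div_def split: if_splits)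
    then show "x \<in> Vert ` verts G \<union> P"
    proof (cases rule: gpoints_cases)
      case (EPt e t)
      have "t \<in> Bf e"
      proof (rule ccontr)
        assume "t \<notin> Bf e"
        then have "ord G f x = 0"
          using piecewise_linear_out_slopes_cancel[of "edge_fun G f e" "len G e" "Bf e" t] pl EPt
          by (simp add: ord_EPt)
        with x \<open>x \<in> gpoints G\<close> show False by (simp add: supp_def principal_div_def)
      qed
      then show ?thesis using EPt by (auto simp: P_def Sg_def)
    qed auto
  qed
  then show "finite (supp (principal_div G f))"
    using fin \<open>finite P\<close> by (auto intro: finite_subset)
  have "div_deg (principal_div G f) = (\<Sum>x\<in>Vert ` verts G \<union> P. principal_div G f x)"
    using fin \<open>finite P\<close> supp_sub by (intro div_deg_eq_sum) auto
  also have "\<dots> = (\<Sum>x\<in>Vert ` verts G. principal_div G f x) + (\<Sum>x\<in>P. principal_div G f x)"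
    using fin \<open>finite P\<close> by (intro sum.union_disjoint) (auto simp: P_def)
  also have "(\<Sum>x\<in>Vert ` verts G. principal_div G f x) = (\<Sum>e\<in>edges G. ?rd e + ?ld e)"
    by (subst sum.reindex) (auto simp: inj_on_def principal_div_def gpoints_def sum_ord_verts[OF mg])
  also have "(\<Sum>x\<in>P. principal_div G f x) = (\<Sum>(e, t)\<in>Sg. ord G f (EPt e t))"
    unfolding P_def using inj
    by (subst sum.reindex) (auto intro!: sum.cong simp: Sg_def principal_div_def gpoints_def)
  also have "\<dots> = (\<Sum>e\<in>edges G. \<Sum>t\<in>Bf e \<inter> {0<..<len G e}. ord G f (EPt e t))"
    unfolding Sg_def using fin pl by (intro sum.Sigma[symmetric]) (auto simp: piecewise_linear_def)
  also have "\<dots> = (\<Sum>e\<in>edges G. - ?ld e - ?rd e)"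
    using piecewise_linear_out_slope_sum pl lpos by (simp add: ord_EPt)
  finally show "div_deg (principal_div G f) = 0"
    by (simp add: sum.distrib sum_subtractf sum_negf)
qed

lemma card_I_set_le_div_deg:
  assumes mg: "metric_graph G" and "is_divisor G D" and "f \<in> R_space G D"
  shows "finite (I_set G (\<lambda>x. D x + principal_div G f x))"
    and "int (card (I_set G (\<lambda>x. D x + principal_div G f x))) \<le> div_deg D"
proof -
  define L where "L = (\<lambda>x. D x + principal_div G f x)"
  have "is_rational G f" and L_nonneg: "\<And>x. 0 \<le> L x"
    using \<open>f \<in> R_space G D\<close> by (auto simp: R_space_def effective_def L_def)
  define A where "A = supp D \<union> supp (principal_div G f)"
  have "finite A"
    using \<open>is_divisor G D\<close> principal_div_degree_zero(1)[OF mg \<open>is_rational G f\<close>]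
    by (simp add: A_def is_divisor_def)
  have "I_set G L \<subseteq> A" by (auto simp: I_set_def A_def supp_def L_def)
  then show "finite (I_set G L)" using \<open>finite A\<close> by (rule finite_subset)
  have "int (card (I_set G L)) = (\<Sum>x\<in>I_set G L. 1)" by simp
  also have "\<dots> \<le> (\<Sum>x\<in>I_set G L. L x)" by (rule sum_mono) (auto simp: I_set_def)
  also have "\<dots> \<le> (\<Sum>x\<in>A. L x)"
    using \<open>finite A\<close> \<open>I_set G L \<subseteq> A\<close> L_nonneg by (intro sum_mono2) auto
  also have "\<dots> = div_deg D + div_deg (principal_div G f)"
    using div_deg_eq_sum[OF \<open>finite A\<close>, of D] div_deg_eq_sum[OF \<open>finite A\<close>, of "principal_div G f"]
    by (simp add: L_def sum.distrib A_def)
  finally show "int (card (I_set G L)) \<le> div_deg D"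
    using principal_div_degree_zero(2)[OF mg \<open>is_rational G f\<close>] by simp
qed

section \<open>Cutting a metric graph at finitely many points\<close>

lemma seg_relI:
  assumes "e \<in> edges G" "0 \<le> s" "s \<le> len G e" "0 \<le> t" "t \<le> len G e"
    and "\<And>u. min s t \<le> u \<Longrightarrow> u \<le> max s t \<Longrightarrow> epos G e u \<notin> S"
  shows "(epos G e s, epos G e t) \<in> seg_rel G S"
  unfolding seg_rel_def using assms by blast

lemma seg_relE:
  assumes "(a, b) \<in> seg_rel G S"
  obtains e s t where "a = epos G e s" "b = epos G e t" "e \<in> edges G"
    "0 \<le> s" "s \<le> len G e" "0 \<le> t" "t \<le> len G e"
    "\<And>u. min s t \<le> u \<Longrightarrow> u \<le> max s t \<Longrightarrow> epos G e u \<notin> S"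
  using assms unfolding seg_rel_def by blast

lemma seg_rel_sym: "(a, b) \<in> seg_rel G S \<Longrightarrow> (b, a) \<in> seg_rel G S"
  by (elim seg_relE, simp only:, rule seg_relI) (auto simp: min.commute max.commute)

lemma sym_rtrancl_seg_rel: "sym ((seg_rel G S)\<^sup>*)"
  by (rule sym_rtrancl) (auto intro: symI seg_rel_sym)

lemma seg_rel_antimono: "S \<subseteq> S' \<Longrightarrow> seg_rel G S' \<subseteq> seg_rel G S"
  unfolding seg_rel_def by blast

lemma seg_rel_subsegment:
  assumes "e \<in> edges G" "0 \<le> s" "s \<le> len G e" "0 \<le> s'" "s' \<le> len G e"
    and avoid: "\<And>u. min s s' \<le> u \<Longrightarrow> u \<le> max s s' \<Longrightarrow> epos G e u \<notin> S"
    and "min s s' \<le> t" "t \<le> max s s'"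
  shows "(epos G e s, epos G e t) \<in> seg_rel G S"
  using assms by (intro seg_relI) (auto intro!: avoid)

lemma rtrancl_Image_eq_if_sym:
  assumes "sym (r\<^sup>*)" "(x, y) \<in> r\<^sup>*"
  shows "r\<^sup>* `` {y} = r\<^sup>* `` {x}"
proof -
  have "(y, x) \<in> r\<^sup>*" using assms by (meson symD)
  then show ?thesis using assms(2) by (auto intro: rtrancl_trans)
qed

lemma finite_avoiding_interval:
  fixes S :: "('v, 'e) gpoint set"
  assumes "finite S" "EPt e t \<notin> S" "0 < t" "t < l"
  obtains \<delta> where "0 < \<delta>" "0 < t - \<delta>" "t + \<delta> < l" "\<And>v. t - \<delta> \<le> v \<Longrightarrow> v \<le> t + \<delta> \<Longrightarrow> EPt e v \<notin> S"
proof -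
  have "finite (EPt e -` S)" using assms(1) by (rule finite_vimageI) (simp add: inj_on_def)
  then have "open (- EPt e -` S)" by (simp add: finite_imp_closed open_Compl)
  moreover have "t \<in> - EPt e -` S" using assms(2) by simp
  ultimately obtain \<epsilon> where "0 < \<epsilon>" and \<epsilon>: "\<And>v. dist v t < \<epsilon> \<Longrightarrow> EPt e v \<notin> S"
    unfolding open_dist by blast
  define \<delta> where "\<delta> = min (\<epsilon> / 2) (min (t / 2) ((l - t) / 2))"
  have "0 < \<delta>" using \<open>0 < \<epsilon>\<close> assms(3,4) by (simp add: \<delta>_def)
  have "\<delta> \<le> \<epsilon> / 2" "\<delta> \<le> t / 2" "\<delta> \<le> (l - t) / 2"
    unfolding \<delta>_def by linarith+
  show ?thesis
  proof
    show "0 < \<delta>" by fact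
    show "0 < t - \<delta>" using \<open>\<delta> \<le> t / 2\<close> assms(3) by linarith
    show "t + \<delta> < l" using \<open>\<delta> \<le> (l - t) / 2\<close> assms(4) by (simp add: field_simps)
    fix v assume "t - \<delta> \<le> v" "v \<le> t + \<delta>"
    then have "\<bar>v - t\<bar> \<le> \<delta>" by (simp add: abs_le_iff)
    then have "dist v t < \<epsilon>" using \<open>0 < \<epsilon>\<close> \<open>\<delta> \<le> \<epsilon> / 2\<close> by (simp add: dist_real_def)
    then show "EPt e v \<notin> S" by (rule \<epsilon>)
  qed
qed

lemma seg_rel_insert_same_side:
  assumes "e \<in> edges G" "0 \<le> s" "s \<le> len G e" "0 \<le> s'" "s' \<le> len G e"
    and avoid: "\<And>u. min s s' \<le> u \<Longrightarrow> u \<le> max s s' \<Longrightarrow> epos G e u \<notin> S"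
    and between: "min s s' \<le> t" "t \<le> max s s'"
    and near: "\<And>v. t - \<delta> \<le> v \<Longrightarrow> v \<le> t + \<delta> \<Longrightarrow> EPt e v \<notin> S" "0 < t - \<delta>" "t + \<delta> < len G e"
    and w: "t - \<delta> \<le> w" "w \<le> t + \<delta>"
    and same_side: "(w < t \<and> s' < t) \<or> (t < w \<and> t < s')"
  shows "(epos G e w, epos G e s') \<in> seg_rel G (insert (EPt e t) S)"
proof (rule seg_relI)
  show "0 \<le> w" "w \<le> len G e" using w near(2,3) by linarith+
  fix v assume v: "min w s' \<le> v" "v \<le> max w s'"
  then have "v \<noteq> t" using same_side by auto
  then have "epos G e v \<noteq> EPt e t" by (simp add: epos_eq_EPt_iff)
  moreover have "epos G e v \<notin> S"
  proof (cases "t - \<delta> \<le> v \<and> v \<le> t + \<delta>")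
    case True
    then show ?thesis using near by (simp add: epos_interior)
  next
    case False
    then have "min s s' \<le> v" "v \<le> max s s'" using v w between same_side by auto
    then show ?thesis by (rule avoid)
  qed
  ultimately show "epos G e v \<notin> insert (EPt e t) S" by simp
qed (use assms in auto)

lemma seg_rel_rtrancl_insert_if_unreachable:
  assumes "(y, z) \<in> (seg_rel G S)\<^sup>*" "(x, y) \<notin> (seg_rel G S)\<^sup>*"
  shows "(y, z) \<in> (seg_rel G (insert x S))\<^sup>*"
  using assms(1)
proof (induction rule: rtrancl_induct)
  case (step w z)
  from step.hyps(2) obtain e s s' where seg: "w = epos G e s" "z = epos G e s'" "e \<in> edges G"
    "0 \<le> s" "s \<le> len G e" "0 \<le> s'" "s' \<le> len G e"
    and avoid: "\<And>u. min s s' \<le> u \<Longrightarrow> u \<le> max s s' \<Longrightarrow> epos G e u \<notin> S"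
    by (elim seg_relE) blast
  show ?case
  proof (cases "\<exists>u. min s s' \<le> u \<and> u \<le> max s s' \<and> epos G e u = x")
    case True
    then obtain u where "min s s' \<le> u" "u \<le> max s s'" "epos G e u = x" by blast
    then have "(w, x) \<in> seg_rel G S" using seg seg_rel_subsegment[OF _ _ _ _ _ avoid] by metis
    with step.hyps(1) have "(y, x) \<in> (seg_rel G S)\<^sup>*" by simp
    then have "(x, y) \<in> (seg_rel G S)\<^sup>*" using sym_rtrancl_seg_rel by (metis symD)
    with assms(2) show ?thesis by contradiction
  next
    case False
    then have "(w, z) \<in> seg_rel G (insert x S)"
      unfolding seg(1,2) using seg avoid by (intro seg_relI) auto
    with step.IH show ?thesis by simp
  qed
qed simp

lemma seg_rel_rtrancl_insert_from_point:
  assumes "e \<in> edges G" "0 < t" "t < len G e"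
    and near: "\<And>v. t - \<delta> \<le> v \<Longrightarrow> v \<le> t + \<delta> \<Longrightarrow> EPt e v \<notin> S"
      "0 < \<delta>" "0 < t - \<delta>" "t + \<delta> < len G e"
    and "(EPt e t, z) \<in> (seg_rel G S)\<^sup>*"
  shows "z = EPt e t \<or> (epos G e (t - \<delta>), z) \<in> (seg_rel G (insert (EPt e t) S))\<^sup>*
           \<or> (epos G e (t + \<delta>), z) \<in> (seg_rel G (insert (EPt e t) S))\<^sup>*"
  using assms(8)
proof (induction rule: rtrancl_induct)
  case (step y z)
  let ?R' = "seg_rel G (insert (EPt e t) S)"
  from step.hyps(2) obtain e' s s' where seg: "y = epos G e' s" "z = epos G e' s'" "e' \<in> edges G"
    "0 \<le> s" "s \<le> len G e'" "0 \<le> s'" "s' \<le> len G e'"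
    and avoid: "\<And>u. min s s' \<le> u \<Longrightarrow> u \<le> max s s' \<Longrightarrow> epos G e' u \<notin> S"
    by (elim seg_relE) blast
  show ?case
  proof (cases "\<exists>u. min s s' \<le> u \<and> u \<le> max s s' \<and> epos G e' u = EPt e t")
    case True
    then have "e' = e" and between: "min s s' \<le> t" "t \<le> max s s'"
      by (auto simp: epos_eq_EPt_iff)
    have avoid_e: "\<And>u. min s s' \<le> u \<Longrightarrow> u \<le> max s s' \<Longrightarrow> epos G e u \<notin> S"
      using avoid \<open>e' = e\<close> by simp
    note same_side = seg_rel_insert_same_side[OF assms(1) seg(4-7)[unfolded \<open>e' = e\<close>]
        avoid_e between near(1,3,4)]
    consider "s' = t" | "s' < t" | "t < s'" by linarith
    then show ?thesis
    proof cases
      case 1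
      then show ?thesis using seg(2) assms(2,3) \<open>e' = e\<close> by (simp add: epos_interior)
    next
      case 2
      then have "(epos G e (t - \<delta>), z) \<in> ?R'"
        using same_side[of "t - \<delta>"] seg \<open>e' = e\<close> near(2) by auto
      then show ?thesis by auto
    next
      case 3
      then have "(epos G e (t + \<delta>), z) \<in> ?R'"
        using same_side[of "t + \<delta>"] seg \<open>e' = e\<close> near(2) by auto
      then show ?thesis by auto
    qed
  next
    case False
    then have "(y, z) \<in> ?R'"
      unfolding seg(1,2) using seg avoid by (intro seg_relI) auto
    moreover have "y \<noteq> EPt e t" using False seg(1) by (metis max.cobounded1 min.cobounded1)
    ultimately show ?thesis using step.IH by (meson rtrancl.rtrancl_into_rtrancl)
  qed
qed simp

text \<open>After removing \<open>x\<close>, a component either is an old component not containing \<open>x\<close>, or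
  contains one of the two points at distance \<open>\<delta>\<close> from \<open>x\<close> on its edge.\<close>

lemma card_components_insert_le:
  fixes G :: "('v, 'e) mgraph"
  assumes "finite S" "e \<in> edges G" "0 < t" "t < len G e" "EPt e t \<notin> S"
    and fin: "finite (components G S)"
  shows "finite (components G (insert (EPt e t) S))"
    and "card (components G (insert (EPt e t) S)) \<le> card (components G S) + 1"
proof -
  obtain \<delta> where near: "\<And>v. t - \<delta> \<le> v \<Longrightarrow> v \<le> t + \<delta> \<Longrightarrow> EPt e v \<notin> S"
    "0 < \<delta>" "0 < t - \<delta>" "t + \<delta> < len G e"
    using finite_avoiding_interval[OF assms(1,5,3,4)] by metis
  define x :: "('v, 'e) gpoint" where "x = EPt e t"
  define R where "R = seg_rel G S"
  define R' where "R' = seg_rel G (insert x S)"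
  define C where "C = R\<^sup>* `` {x}"
  define ends where "ends = {R'\<^sup>* `` {epos G e (t - \<delta>)}, R'\<^sup>* `` {epos G e (t + \<delta>)}}"
  have "x \<in> gpoints G - S" using assms(2-5) by (auto simp: x_def gpoints_def)
  then have "C \<in> components G S"
    unfolding C_def R_def components_def by (rule quotientI)
  have "components G (insert x S) \<subseteq> (components G S - {C}) \<union> ends"
  proof
    fix K assume "K \<in> components G (insert x S)"
    then obtain y where y: "y \<in> gpoints G - insert x S" and K: "K = R'\<^sup>* `` {y}"
      unfolding components_def R'_def by (rule quotientE)
    show "K \<in> (components G S - {C}) \<union> ends"
    proof (cases "(x, y) \<in> R\<^sup>*")
      case True
      then have "(epos G e (t - \<delta>), y) \<in> R'\<^sup>* \<or> (epos G e (t + \<delta>), y) \<in> R'\<^sup>*"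
        using seg_rel_rtrancl_insert_from_point[OF assms(2-4) near] y
        unfolding R_def R'_def x_def by blast
      then show ?thesis
        using rtrancl_Image_eq_if_sym[OF sym_rtrancl_seg_rel] K unfolding ends_def R'_def by blast
    next
      case False
      have "R'\<^sup>* \<subseteq> R\<^sup>*"
        unfolding R_def R'_def by (intro rtrancl_mono seg_rel_antimono) auto
      moreover have "R\<^sup>* `` {y} \<subseteq> R'\<^sup>* `` {y}"
        using seg_rel_rtrancl_insert_if_unreachable False unfolding R_def R'_def by blast
      ultimately have "K = R\<^sup>* `` {y}" using K by blast
      moreover have "R\<^sup>* `` {y} \<in> components G S"
        using y unfolding components_def R_def by (intro quotientI) auto
      moreover have "R\<^sup>* `` {y} \<noteq> C"
        using False rtrancl_Image_eq_if_sym[OF sym_rtrancl_seg_rel, of x y G S]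
        unfolding C_def R_def by auto
      ultimately show ?thesis by blast
    qed
  qed
  moreover have "finite ends" "card ends \<le> 2" by (auto simp: ends_def card_insert_le_m1)
  ultimately show "finite (components G (insert (EPt e t) S))"
    using fin unfolding x_def by (meson finite_Diff finite_UnI finite_subset)
  have "card (components G (insert x S)) \<le> card ((components G S - {C}) \<union> ends)"
    using \<open>_ \<subseteq> _\<close> fin \<open>finite ends\<close> by (intro card_mono) auto
  also have "\<dots> \<le> card (components G S - {C}) + card ends" by (rule card_Un_le)
  also have "\<dots> \<le> card (components G S) + 1"
  proof -
    have "0 < card (components G S)" using \<open>C \<in> components G S\<close> fin card_gt_0_iff by blast
    then show ?thesis using \<open>C \<in> components G S\<close> \<open>card ends \<le> 2\<close> by simp
  qed
  finally show "card (components G (insert (EPt e t) S)) \<le> card (components G S) + 1"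
    by (simp add: x_def)
qed

lemma card_components_union_le:
  assumes "finite S" "finite T" "T \<subseteq> gpoints G - Vert ` verts G" "finite (components G S)"
  shows "finite (components G (S \<union> T)) \<and> card (components G (S \<union> T)) \<le> card (components G S) + card T"
  using assms(2,3)
proof (induction T rule: finite_induct)
  case empty
  then show ?case using assms(4) by simp
next
  case (insert x T)
  then have IH: "finite (components G (S \<union> T))" "card (components G (S \<union> T)) \<le> card (components G S) + card T"
    by auto
  show ?case
  proof (cases "x \<in> S \<union> T")
    case True
    then show ?thesis using IH insert.hyps by (simp add: insert_absorb)
  next
    case False
    obtain e t where x: "x = EPt e t" "e \<in> edges G" "0 < t" "t < len G e"
      using insert.prems by (auto elim: gpoints_cases)
    have "finite (S \<union> T)" using assms(1) insert.hyps(1) by simp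
    from card_components_insert_le[OF this x(2-4) False[unfolded x(1)] IH(1)]
    show ?thesis using IH(2) insert.hyps x(1) by simp
  qed
qed

lemma num_components_union_le:
  assumes "num_components G S = 1" "finite S" "finite T" "T \<subseteq> gpoints G - Vert ` verts G"
  shows "num_components G (S \<union> T) \<le> 1 + card T"
proof -
  have "finite (components G S)" using assms(1) card.infinite by (fastforce simp: num_components_eq_card)
  then show ?thesis
    using card_components_union_le[OF assms(2-4)] assms(1) by (simp add: num_components_eq_card)
qed

section \<open>Cells of the linear system\<close>

lemma cell_dim_eq_components:
  assumes "cell G D c \<noteq> {}"
  obtains f where "f \<in> R_space G D"
    "cell_dim G D c = int (num_components G (I_set G (\<lambda>x. D x + principal_div G f x))) - 1"
proof -
  have "(SOME L. L \<in> cell G D c) \<in> cell G D c" using assms by (simp add: some_in_eq)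
  then obtain f where "f \<in> R_space G D" "(SOME L. L \<in> cell G D c) = (\<lambda>x. D x + principal_div G f x)"
    by (auto simp: cell_def lin_sys_def)
  then show ?thesis using that by (simp add: cell_dim_def)
qed

lemma cell_dim_le_div_deg:
  assumes mg: "metric_graph G" and "is_divisor G D" and "cell G D c \<noteq> {}"
  shows "cell_dim G D c \<le> div_deg D"
    and "two_connected G \<Longrightarrow> 1 \<le> div_deg D \<Longrightarrow> cell_dim G D c \<le> div_deg D - 1"
proof -
  obtain f where "f \<in> R_space G D"
    and dim: "cell_dim G D c = int (num_components G (I_set G (\<lambda>x. D x + principal_div G f x))) - 1"
    using cell_dim_eq_components[OF \<open>cell G D c \<noteq> {}\<close>] by blast
  define I where "I = I_set G (\<lambda>x. D x + principal_div G f x)"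
  have "finite I" "int (card I) \<le> div_deg D"
    using card_I_set_le_div_deg[OF mg \<open>is_divisor G D\<close> \<open>f \<in> R_space G D\<close>] by (simp_all add: I_def)
  have I_interior: "I \<subseteq> gpoints G - Vert ` verts G" by (auto simp: I_def I_set_def)
  have connected: "num_components G {} = 1" using mg by (simp add: metric_graph_def)
  show "cell_dim G D c \<le> div_deg D"
    using num_components_union_le[OF connected _ \<open>finite I\<close> I_interior] dim \<open>int (card I) \<le> div_deg D\<close>
    unfolding I_def by simp
  assume "two_connected G" "1 \<le> div_deg D"
  show "cell_dim G D c \<le> div_deg D - 1"
  proof (cases "I = {}")
    case True
    then show ?thesis using dim connected \<open>1 \<le> div_deg D\<close> by (simp add: I_def)
  next
    case False
    then obtain x where "x \<in> I" by blast
    then have "num_components G {x} = 1"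
      using \<open>two_connected G\<close> I_interior by (auto simp: two_connected_def)
    then have "num_components G ({x} \<union> (I - {x})) \<le> 1 + card (I - {x})"
      using I_interior \<open>finite I\<close> by (intro num_components_union_le) auto
    moreover have "{x} \<union> (I - {x}) = I" "card (I - {x}) = card I - 1" "1 \<le> card I"
      using \<open>x \<in> I\<close> \<open>finite I\<close> by (auto simp: Suc_le_eq card_gt_0_iff)
    ultimately show ?thesis using dim \<open>int (card I) \<le> div_deg D\<close> unfolding I_def by simp
  qed
qed

lemma out_slope_const: "out_slope (\<lambda>u. a) u \<sigma> = 0"
  by (rule out_slope_eqI[of 1]) auto

lemma principal_div_const: "principal_div G (\<lambda>x. a) = (\<lambda>x. 0)"
  by (auto simp: principal_div_def ord_def edge_fun_def out_slope_const split: gpoint.split)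

lemma is_rational_const:
  assumes "metric_graph G"
  shows "is_rational G (\<lambda>x. a)"
  unfolding is_rational_iff_piecewise_linear
proof
  fix e assume "e \<in> edges G"
  then have "0 < len G e" using assms by (simp add: metric_graph_def)
  then have "piecewise_linear (\<lambda>u. a) (len G e) {0, len G e}"
    by (auto simp: piecewise_linear_def slope_on_def)
  then show "\<exists>B. piecewise_linear (edge_fun G (\<lambda>x. a) e) (len G e) B"
    by (auto simp: edge_fun_def)
qed

lemma vertex_supported_cell_nonempty:
  assumes mg: "metric_graph G" and "effective D" and vs: "vertex_supported G D"
  shows "valid_cell_data G (\<lambda>v. nat (D (Vert v)), \<lambda>e. [], \<lambda>e. 0)"
    and "D \<in> cell G D (\<lambda>v. nat (D (Vert v)), \<lambda>e. [], \<lambda>e. 0)"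
proof -
  show "valid_cell_data G (\<lambda>v. nat (D (Vert v)), \<lambda>e. [], \<lambda>e. 0)"
    by (simp add: valid_cell_data_def)
  have "(\<lambda>x. 0) \<in> R_space G D"
    using is_rational_const[OF mg] \<open>effective D\<close> by (simp add: R_space_def principal_div_const)
  then have "D \<in> lin_sys G D" unfolding lin_sys_def by (force simp: principal_div_const)
  moreover have "out_slope (edge_fun G f e) 0 1 = 0"
    if f: "f \<in> R_space G D" and fixes_D: "(\<lambda>x. D x + principal_div G f x) = D"
      and e: "e \<in> edges G" for f e
  proof -
    have "\<forall>x\<in>gpoints G. ord G f x = 0"
    proof
      fix x assume "x \<in> gpoints G"
      with fun_cong[OF fixes_D, of x] show "ord G f x = 0" by (simp add: principal_div_def)
    qed
    then obtain M where M: "\<forall>x\<in>gpoints G. f x = M"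
      using harmonic_rational_constant[OF mg] f by (auto simp: R_space_def)
    then have "edge_fun G f e u = M" if "0 \<le> u" "u \<le> len G e" for u
      using epos_in_gpoints[OF mg e that] by (simp add: edge_fun_def)
    moreover have "0 < len G e" using mg e by (simp add: metric_graph_def)
    ultimately show ?thesis by (intro out_slope_eqI[of "len G e"]) auto
  qed
  moreover have "D (EPt e t) = 0" for e t
    using vs by (auto simp: vertex_supported_def supp_def)
  ultimately show "D \<in> cell G D (\<lambda>v. nat (D (Vert v)), \<lambda>e. [], \<lambda>e. 0)"
    using \<open>effective D\<close> by (auto simp: cell_def in_cell_def effective_def)
qed

theorem corollary2p5:
  fixes G :: "('v, 'e) mgraph" and D :: "('v, 'e) gpoint \<Rightarrow> int"
  assumes "metric_graph G" and "is_divisor G D" and "effective D" and "vertex_supported G D"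
  shows "linsys_dim G D \<le> div_deg D \<and>
         (two_connected G \<and> 1 \<le> div_deg D \<longrightarrow> linsys_dim G D \<le> div_deg D - 1)"
proof -
  define dims where "dims = {cell_dim G D c | c. valid_cell_data G c \<and> cell G D c \<noteq> {}}"
  have "dims \<noteq> {}"
    using vertex_supported_cell_nonempty[OF assms(1,3,4)] unfolding dims_def by blast
  have bounds: "\<forall>d\<in>dims. -1 \<le> d \<and> d \<le> div_deg D \<and>
                   (two_connected G \<and> 1 \<le> div_deg D \<longrightarrow> d \<le> div_deg D - 1)"
  proof
    fix d assume "d \<in> dims"
    then obtain c where "d = cell_dim G D c" "cell G D c \<noteq> {}" by (auto simp: dims_def)
    moreover have "-1 \<le> cell_dim G D c" by (simp add: cell_dim_def)
    ultimately show "-1 \<le> d \<and> d \<le> div_deg D \<and>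
        (two_connected G \<and> 1 \<le> div_deg D \<longrightarrow> d \<le> div_deg D - 1)"
      using cell_dim_le_div_deg[OF assms(1,2)] by blast
  qed
  then have "finite dims" by (intro finite_subset[of dims "{-1..div_deg D}"]) auto
  then show ?thesis
    using bounds \<open>dims \<noteq> {}\<close> unfolding linsys_dim_def dims_def[symmetric] by (simp add: Max_le_iff)
qed

end
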